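(* Let $T$ be a locally compact Hausdorff space and $\tau : T\to T$ a proper local homeomorphism. Then $(T,\tau)$ is topologically free if and only if the topological graph $E = (T,T,\tau,\mathrm{id})$ is topologically free.
   Context: $(T,\tau)$ is topologically free if for all $m\neq n\in\mathbb{N}$ the set $H_{m,n} := \{t\in T : \tau^m(t) = \tau^n(t)\}$ has empty interior. The topological graph $E = (E^0,E^1,d,r)$ has vertex space $E^0 = T$, edge space $E^1 = T$, source map $d = \tau$ and range map $r = \mathrm{id}$. A path of length $n\ge1$ in $E$ is $e = (e_1,\dots,e_n)$ with $e_k\in E^1$ and $d(e_k) = r(e_{k+1})$; it is a loop if $r(e_1) = d(e_n)$, with base point $r(e_1)$. An entry of a loop $e$ is an edge $f\in E^1$ with $r(f) = r(e_k)$ and $f\neq e_k$ for some $k$. The topological graph $E$ is topologically free if the set of base points of loops without entries has empty interior in $E^0$. *)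

theory Defs
  imports "HOL-Analysis.Analysis"
begin

definition proper_cont_map :: "'a topology \<Rightarrow> 'b topology \<Rightarrow> ('a \<Rightarrow> 'b) \<Rightarrow> bool" where
  "proper_cont_map X Y f \<longleftrightarrow> continuous_map X Y f \<and>
     (\<forall>K. compactin Y K \<longrightarrow> compactin X {x \<in> topspace X. f x \<in> K})"

definition local_homeomorphism :: "'a topology \<Rightarrow> 'b topology \<Rightarrow> ('a \<Rightarrow> 'b) \<Rightarrow> bool" where
  "local_homeomorphism X Y f \<longleftrightarrow> continuous_map X Y f \<and>
     (\<forall>x \<in> topspace X. \<exists>U. openin X U \<and> x \<in> U \<and> openin Y (f ` U) \<and>
        homeomorphic_map (subtopology X U) (subtopology Y (f ` U)) f)"

text \<open>Topological freeness of the dynamical system (T, tau); N includes 0.\<close>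
definition dyn_topologically_free :: "'a topology \<Rightarrow> ('a \<Rightarrow> 'a) \<Rightarrow> bool" where
  "dyn_topologically_free X \<tau> \<longleftrightarrow>
     (\<forall>m n::nat. m \<noteq> n \<longrightarrow> X interior_of {t \<in> topspace X. (\<tau> ^^ m) t = (\<tau> ^^ n) t} = {})"

text \<open>Topological graphs: edge space E1 (a set), source d, range r.
  A path of length n \<ge> 1 is e 1, ..., e n.\<close>
definition tg_path :: "'e set \<Rightarrow> ('e \<Rightarrow> 'v) \<Rightarrow> ('e \<Rightarrow> 'v) \<Rightarrow> nat \<Rightarrow> (nat \<Rightarrow> 'e) \<Rightarrow> bool" where
  "tg_path E1 d r n e \<longleftrightarrow> n \<ge> 1 \<and> (\<forall>k\<in>{1..n}. e k \<in> E1) \<and>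
     (\<forall>k\<in>{1..<n}. d (e k) = r (e (Suc k)))"

definition tg_loop :: "'e set \<Rightarrow> ('e \<Rightarrow> 'v) \<Rightarrow> ('e \<Rightarrow> 'v) \<Rightarrow> nat \<Rightarrow> (nat \<Rightarrow> 'e) \<Rightarrow> bool" where
  "tg_loop E1 d r n e \<longleftrightarrow> tg_path E1 d r n e \<and> r (e 1) = d (e n)"

definition tg_entry :: "'e set \<Rightarrow> ('e \<Rightarrow> 'v) \<Rightarrow> nat \<Rightarrow> (nat \<Rightarrow> 'e) \<Rightarrow> 'e \<Rightarrow> bool" where
  "tg_entry E1 r n e f \<longleftrightarrow> f \<in> E1 \<and> (\<exists>k\<in>{1..n}. r f = r (e k) \<and> f \<noteq> e k)"

definition tg_topologically_free ::
  "'v topology \<Rightarrow> 'e set \<Rightarrow> ('e \<Rightarrow> 'v) \<Rightarrow> ('e \<Rightarrow> 'v) \<Rightarrow> bool" where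
  "tg_topologically_free E0 E1 d r \<longleftrightarrow>
     E0 interior_of {v. \<exists>n e. tg_loop E1 d r n e \<and> r (e 1) = v \<and> \<not> (\<exists>f. tg_entry E1 r n e f)} = {}"

end

theory Submission
  imports Defs
begin

text \<open>Since the range map of \<open>E\<close> is the identity, no loop has an entry, and a loop based at \<open>v\<close>
  is just the orbit of a periodic point \<open>v\<close>; so \<open>E\<close> is topologically free iff the set of
  periodic points of \<open>\<tau>\<close> has empty interior. Each set \<open>{t. \<tau>\<^sup>n t = t}\<close> is closed (by the Hausdorff
  property), so by the Baire category theorem their countable union has empty interior as soon
  as each of them has. Conversely, if \<open>\<tau>\<^sup>m = \<tau>\<^sup>n\<close> (\<open>m < n\<close>) on a nonempty open set \<open>U\<close>, then the
  open set \<open>\<tau>\<^sup>m U\<close> consists of points of period \<open>n - m\<close>.\<close>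

definition periodic_points :: "'a set \<Rightarrow> ('a \<Rightarrow> 'a) \<Rightarrow> 'a set" where
  "periodic_points S \<tau> = (\<Union>n\<in>{1..}. {t \<in> S. (\<tau> ^^ n) t = t})"

lemma continuous_map_funpow: "continuous_map X X f \<Longrightarrow> continuous_map X X (f ^^ n)"
  by (induction n) (auto simp: funpow_Suc_right intro: continuous_map_compose)

lemma open_map_funpow: "open_map X X f \<Longrightarrow> open_map X X (f ^^ n)"
  by (induction n) (auto simp: funpow_Suc_right open_map_id intro: open_map_compose)

lemma local_homeomorphism_imp_open_map:
  assumes "local_homeomorphism X Y f"
  shows "open_map X Y f"
  unfolding open_map_def
proof (intro allI impI)
  fix V assume V: "openin X V"
  show "openin Y (f ` V)"
    unfolding openin_subopen[of Y "f ` V"]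
  proof
    fix y assume "y \<in> f ` V"
    then obtain x where x: "x \<in> V" "y = f x" by auto
    then have "x \<in> topspace X" using V openin_subset by blast
    then obtain U where U: "openin X U" "x \<in> U" "openin Y (f ` U)"
      "homeomorphic_map (subtopology X U) (subtopology Y (f ` U)) f"
      using assms unfolding local_homeomorphism_def by blast
    have "openin (subtopology X U) (V \<inter> U)"
      using V openin_subtopology_Int by blast
    then have "openin (subtopology Y (f ` U)) (f ` (V \<inter> U))"
      using U(4) homeomorphic_imp_open_map open_map_def by blast
    then have "openin Y (f ` (V \<inter> U))"
      using U(3) openin_trans_full by blast
    then show "\<exists>T. openin Y T \<and> y \<in> T \<and> T \<subseteq> f ` V"
      using x U(2) by blast
  qed
qed

lemma tg_path_id_range_orbit:
  assumes "tg_path E1 \<tau> id n e"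
  shows "Suc k \<le> n \<Longrightarrow> e (Suc k) = (\<tau> ^^ k) (e 1)"
proof (induction k)
  case (Suc k)
  then have "Suc k \<in> {1..<n}" by simp
  then have "\<tau> (e (Suc k)) = e (Suc (Suc k))"
    using assms unfolding tg_path_def by simp
  with Suc show ?case by simp
qed simp

lemma tg_entry_inj_range: "inj r \<Longrightarrow> \<not> tg_entry E1 r n e f"
  unfolding tg_entry_def by (auto dest: injD)

lemma tg_loop_id_range_iff_periodic:
  assumes "\<tau> ` S \<subseteq> S"
  shows "(\<exists>n e. tg_loop S \<tau> id n e \<and> e 1 = v) \<longleftrightarrow> v \<in> periodic_points S \<tau>"
proof
  assume "\<exists>n e. tg_loop S \<tau> id n e \<and> e 1 = v"
  then obtain n e where path: "tg_path S \<tau> id n e"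
    and closed: "e 1 = \<tau> (e n)" and v: "e 1 = v"
    unfolding tg_loop_def by auto
  then obtain k where n: "n = Suc k"
    unfolding tg_path_def using not0_implies_Suc by fastforce
  have "(\<tau> ^^ Suc k) v = v"
    using tg_path_id_range_orbit[OF path, of k] closed v n by simp
  moreover have "v \<in> S"
    using path v unfolding tg_path_def by auto
  ultimately show "v \<in> periodic_points S \<tau>"
    unfolding periodic_points_def by (intro UN_I[of "Suc k"]) auto
next
  assume "v \<in> periodic_points S \<tau>"
  then obtain n where n: "1 \<le> n" and v: "v \<in> S" "(\<tau> ^^ n) v = v"
    unfolding periodic_points_def by auto
  then obtain k where k: "n = Suc k"
    using not0_implies_Suc by fastforce
  define e where "e i = (\<tau> ^^ (i - 1)) v" for i
  have orbit_in_S: "(\<tau> ^^ i) v \<in> S" for i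
    by (induction i) (use v assms in auto)
  have "tg_path S \<tau> id n e"
    unfolding tg_path_def
  proof (intro conjI ballI)
    fix i assume "i \<in> {1..<n}"
    then have "i = Suc (i - 1)" by simp
    then show "\<tau> (e i) = id (e (Suc i))"
      unfolding e_def by (metis comp_apply diff_Suc_1 funpow.simps(2) id_apply)
  qed (use n orbit_in_S e_def in auto)
  moreover have "e 1 = \<tau> (e n)"
    using v k unfolding e_def by simp
  ultimately have "tg_loop S \<tau> id n e"
    unfolding tg_loop_def by simp
  moreover have "e 1 = v"
    unfolding e_def by simp
  ultimately show "\<exists>n e. tg_loop S \<tau> id n e \<and> e 1 = v"
    by blast
qed

lemma interior_of_periodic_points_empty:
  assumes "locally_compact_space X" and "Hausdorff_space X" and "continuous_map X X \<tau>"
    and "\<And>n. 1 \<le> n \<Longrightarrow> X interior_of {t \<in> topspace X. (\<tau> ^^ n) t = t} = {}"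
  shows "X interior_of periodic_points (topspace X) \<tau> = {}"
  unfolding periodic_points_def
proof (rule Baire_category_alt)
  show "completely_metrizable_space X \<or> locally_compact_space X \<and> regular_space X"
    using assms(1,2) locally_compact_Hausdorff_or_regular by blast
next
  fix T assume "T \<in> (\<lambda>n. {t \<in> topspace X. (\<tau> ^^ n) t = t}) ` {1..}"
  then obtain n where "1 \<le> n" and T: "T = {t \<in> topspace X. (\<tau> ^^ n) t = t}" by auto
  moreover have "closedin X T"
    unfolding T using closedin_continuous_maps_eq[OF assms(2)
        continuous_map_funpow[OF assms(3)] continuous_map_id] by simp
  ultimately show "closedin X T \<and> X interior_of T = {}"
    using assms(4) by blast
qed simp

lemma interior_of_iterates_agree_empty:
  assumes "continuous_map X X \<tau>" and "open_map X X \<tau>"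
    and no_periodic: "X interior_of periodic_points (topspace X) \<tau> = {}" and "m < n"
  shows "X interior_of {t \<in> topspace X. (\<tau> ^^ m) t = (\<tau> ^^ n) t} = {}"
proof -
  define U where "U = X interior_of {t \<in> topspace X. (\<tau> ^^ m) t = (\<tau> ^^ n) t}"
  have "(\<tau> ^^ m) ` U \<subseteq> periodic_points (topspace X) \<tau>"
  proof
    fix y assume "y \<in> (\<tau> ^^ m) ` U"
    then obtain t where t: "t \<in> topspace X" "(\<tau> ^^ m) t = (\<tau> ^^ n) t" and y: "y = (\<tau> ^^ m) t"
      unfolding U_def using interior_of_subset by fastforce
    have "(\<tau> ^^ (n - m)) y = (\<tau> ^^ (n - m + m)) t"
      using y by (simp add: funpow_add)
    also have "\<dots> = (\<tau> ^^ n) t"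
      using \<open>m < n\<close> by simp
    finally have "(\<tau> ^^ (n - m)) y = (\<tau> ^^ n) t" .
    moreover have "y \<in> topspace X"
      using continuous_map_funpow[OF assms(1)] t y by (simp add: continuous_map_def Pi_iff)
    ultimately show "y \<in> periodic_points (topspace X) \<tau>"
      unfolding periodic_points_def using \<open>m < n\<close> t y by (intro UN_I[of "n - m"]) auto
  qed
  moreover have "openin X ((\<tau> ^^ m) ` U)"
    using open_map_funpow[OF assms(2)] unfolding open_map_def U_def by simp
  ultimately have "(\<tau> ^^ m) ` U = {}"
    using interior_of_maximal no_periodic by blast
  then show ?thesis unfolding U_def by simp
qed

lemma tg_topologically_free_id_range_iff:
  assumes "\<tau> ` S \<subseteq> S"
  shows "tg_topologically_free X S \<tau> id \<longleftrightarrow> X interior_of periodic_points S \<tau> = {}"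
proof -
  have "{v. \<exists>n e. tg_loop S \<tau> id n e \<and> e 1 = v} = periodic_points S \<tau>"
    using assms by (intro set_eqI) (simp only: mem_Collect_eq tg_loop_id_range_iff_periodic)
  then show ?thesis
    unfolding tg_topologically_free_def by (simp add: tg_entry_inj_range)
qed

lemma dyn_topologically_free_iff_interior_of_periodic_points_empty:
  assumes "locally_compact_space X" and "Hausdorff_space X"
    and cont: "continuous_map X X \<tau>" and "open_map X X \<tau>"
  shows "dyn_topologically_free X \<tau> \<longleftrightarrow> X interior_of periodic_points (topspace X) \<tau> = {}"
proof
  assume free: "dyn_topologically_free X \<tau>"
  show "X interior_of periodic_points (topspace X) \<tau> = {}"
  proof (rule interior_of_periodic_points_empty[OF assms(1,2) cont])
    fix n :: nat assume "1 \<le> n"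
    then show "X interior_of {t \<in> topspace X. (\<tau> ^^ n) t = t} = {}"
      using free[unfolded dyn_topologically_free_def, rule_format, of n 0] by simp
  qed
next
  assume "X interior_of periodic_points (topspace X) \<tau> = {}"
  then have agree: "X interior_of {t \<in> topspace X. (\<tau> ^^ m) t = (\<tau> ^^ n) t} = {}"
    if "m < n" for m n
    using interior_of_iterates_agree_empty[OF assms(3,4)] that by blast
  show "dyn_topologically_free X \<tau>"
    unfolding dyn_topologically_free_def
  proof (intro allI impI)
    fix m n :: nat assume "m \<noteq> n"
    have "{t \<in> topspace X. (\<tau> ^^ m) t = (\<tau> ^^ n) t} = {t \<in> topspace X. (\<tau> ^^ n) t = (\<tau> ^^ m) t}"
      by auto
    with \<open>m \<noteq> n\<close> agree[of m n] agree[of n m]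
    show "X interior_of {t \<in> topspace X. (\<tau> ^^ m) t = (\<tau> ^^ n) t} = {}"
      by (cases "m < n") auto
  qed
qed

theorem lemma6p2:
  fixes X :: "'a topology" and \<tau> :: "'a \<Rightarrow> 'a"
  assumes "locally_compact_space X" and "Hausdorff_space X"
    and "proper_cont_map X X \<tau>" and "local_homeomorphism X X \<tau>"
  shows "dyn_topologically_free X \<tau> \<longleftrightarrow> tg_topologically_free X (topspace X) \<tau> id"
proof -
  have cont: "continuous_map X X \<tau>"
    using assms(4) unfolding local_homeomorphism_def by blast
  then have "\<tau> ` topspace X \<subseteq> topspace X"
    by (simp add: continuous_map_def image_subset_iff Pi_iff)
  then show ?thesis
    using dyn_topologically_free_iff_interior_of_periodic_points_empty[OF assms(1,2) cont
        local_homeomorphism_imp_open_map[OF assms(4)]]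
    by (simp add: tg_topologically_free_id_range_iff)
qed

end
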